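(* Let $V$ be a finite set and let $(V,G)$ be an association scheme with identity relation $1=\{(v,v)\mid v\in V\}$. Let $\equiv_G$ denote the equivalence relation on $V\times V$ whose classes are the relations in $G$. Let $\mathcal{P}_1=\{V\}$, $\mathcal{P}_2=G\setminus\{1\}$, and let $\mathcal{P}_3$ be the partition of $V^{(3)}$ such that $(u_1,u_2,u_3)$ and $(v_1,v_2,v_3)$ lie in the same class if and only if $(u_1,u_2)\equiv_G(v_1,v_2)$, $(u_1,u_3)\equiv_G(v_1,v_3)$ and $(u_2,u_3)\equiv_G(v_2,v_3)$. Then $\{\mathcal{P}_1,\mathcal{P}_2,\mathcal{P}_3\}$ is a $3$-scheme on $V$.
   Context: For a finite set $V$ and $s\geq1$, let $V^{(s)}$ be the set of $s$-tuples of pairwise distinct elements of $V$. For $s>1$ and $1\leq i\leq s$, $\pi^s_i:V^{(s)}\to V^{(s-1)}$ deletes the $i$-th coordinate. $\mathrm{Symm}_s$ acts on $V^{(s)}$ by $(v_1,\dots,v_s)^\tau=(v_{1^\tau},\dots,v_{s^\tau})$. An $m$-collection on $V$ is a set $\{\mathcal{P}_1,\dots,\mathcal{P}_m\}$ where $\mathcal{P}_s$ is a partition of $V^{(s)}$ (classes are called colors). It is an $m$-scheme if for every $1<s\leq m$: (compatibility) whenever $\bar u,\bar v$ lie in the same color of $\mathcal{P}_s$, for every $i$ the tuples $\pi^s_i(\bar u),\pi^s_i(\bar v)$ lie in the same color of $\mathcal{P}_{s-1}$; (regularity) whenever $\bar u,\bar v$ lie in the same color of $\mathcal{P}_{s-1}$,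 for every $1\leq i\leq s$ and every $P\in\mathcal{P}_s$, $\#\{\bar u'\in P\mid \pi^s_i(\bar u')=\bar u\}=\#\{\bar v'\in P\mid\pi^s_i(\bar v')=\bar v\}$; (invariance) for every $P\in\mathcal{P}_s$ and $\tau\in\mathrm{Symm}_s$, $\{\bar v^\tau\mid\bar v\in P\}\in\mathcal{P}_s$. An association scheme is a pair $(X,G)$ with $X$ finite and $G$ a partition of $X\times X$ containing the identity relation, closed under $g\mapsto\{(y,x)\mid(x,y)\in g\}$, and such that for all $f,g,h\in G$ the number $\#\{\gamma\mid(\alpha,\gamma)\in f,(\gamma,\beta)\in g\}$ is the same for all $(\alpha,\beta)\in h$. *)

theory Defs
  imports "HOL-Library.Disjoint_Sets" "HOL-Combinatorics.Permutations"
begin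

definition tuples :: "'a set \<Rightarrow> nat \<Rightarrow> 'a list set" where
  "tuples V s = {xs. length xs = s \<and> distinct xs \<and> set xs \<subseteq> V}"

text \<open>pi_i: delete the i-th coordinate (1-indexed).\<close>
definition del_coord :: "nat \<Rightarrow> 'a list \<Rightarrow> 'a list" where
  "del_coord i xs = take (i - 1) xs @ drop i xs"

text \<open>Action of a permutation tau of {0..<s} (0-indexed coordinates):
  (v_1,...,v_s)^tau = (v_{1^tau},...,v_{s^tau}).\<close>
definition perm_tuple :: "(nat \<Rightarrow> nat) \<Rightarrow> 'a list \<Rightarrow> 'a list" where
  "perm_tuple \<tau> xs = map (\<lambda>i. xs ! (\<tau> i)) [0..<length xs]"

definition m_collection :: "'a set \<Rightarrow> nat \<Rightarrow> (nat \<Rightarrow> 'a list set set) \<Rightarrow> bool" where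
  "m_collection V m P \<longleftrightarrow> (\<forall>s\<in>{1..m}. partition_on (tuples V s) (P s))"

definition m_scheme :: "'a set \<Rightarrow> nat \<Rightarrow> (nat \<Rightarrow> 'a list set set) \<Rightarrow> bool" where
  "m_scheme V m P \<longleftrightarrow> m_collection V m P \<and>
    (\<forall>s\<in>{2..m}.
      (\<comment> \<open>compatibility\<close>
       \<forall>C\<in>P s. \<forall>u\<in>C. \<forall>v\<in>C. \<forall>i\<in>{1..s}.
          \<exists>D\<in>P (s - 1). del_coord i u \<in> D \<and> del_coord i v \<in> D) \<and>
      (\<comment> \<open>regularity\<close>
       \<forall>D\<in>P (s - 1). \<forall>u\<in>D. \<forall>v\<in>D. \<forall>i\<in>{1..s}. \<forall>C\<in>P s.
          card {u'\<in>C. del_coord i u' = u} = card {v'\<in>C. del_coord i v' = v}) \<and>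
      (\<comment> \<open>invariance\<close>
       \<forall>C\<in>P s. \<forall>\<tau>. \<tau> permutes {0..<s} \<longrightarrow> perm_tuple \<tau> ` C \<in> P s))"

definition association_scheme :: "'a set \<Rightarrow> ('a \<times> 'a) set set \<Rightarrow> bool" where
  "association_scheme X G \<longleftrightarrow> finite X \<and> partition_on (X \<times> X) G \<and> Id_on X \<in> G \<and>
    (\<forall>g\<in>G. converse g \<in> G) \<and>
    (\<forall>f\<in>G. \<forall>g\<in>G. \<forall>h\<in>G. \<forall>p\<in>h. \<forall>q\<in>h.
       card {\<gamma>. (fst p, \<gamma>) \<in> f \<and> (\<gamma>, snd p) \<in> g} = card {\<gamma>. (fst q, \<gamma>) \<in> f \<and> (\<gamma>, snd q) \<in> g})"

definition equiv_G :: "('a \<times> 'a) set set \<Rightarrow> 'a \<times> 'a \<Rightarrow> 'a \<times> 'a \<Rightarrow> bool" where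
  "equiv_G G x y \<longleftrightarrow> (\<exists>g\<in>G. x \<in> g \<and> y \<in> g)"

definition rel_tuples :: "('a \<times> 'a) set \<Rightarrow> 'a list set" where
  "rel_tuples g = {[x, y] | x y. (x, y) \<in> g}"

definition P3_of :: "'a set \<Rightarrow> ('a \<times> 'a) set set \<Rightarrow> 'a list set set" where
  "P3_of V G = (\<lambda>u. {w \<in> tuples V 3.
      equiv_G G (u!0, u!1) (w!0, w!1) \<and> equiv_G G (u!0, u!2) (w!0, w!2) \<and>
      equiv_G G (u!1, u!2) (w!1, w!2)}) ` tuples V 3"

end

theory Submission
  imports Defs
begin

text \<open>Give two \<open>s\<close>-tuples the same colour when all their coordinate pairs have the same
  colours in \<open>G\<close>; \<open>\<P>\<^sub>1\<close>, \<open>\<P>\<^sub>2\<close>, \<open>\<P>\<^sub>3\<close> are exactly these partitions for \<open>s = 1, 2, 3\<close>.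
  For every \<open>s\<close> such a partition is compatible with deleting a coordinate and, since \<open>G\<close> is
  closed under converse, invariant under permuting coordinates. Regularity is where \<open>s \<le> 3\<close>
  matters: the triples of a class that extend a pair \<open>(a, b)\<close> by a new entry \<open>x\<close> are counted
  by \<open>#{x. (a, x) \<in> f \<and> (x, b) \<in> g}\<close>, an intersection number of the association scheme,
  which depends only on the colour of \<open>(a, b)\<close>.\<close>

definition same_pair_colors :: "('a \<times> 'a) set set \<Rightarrow> nat \<Rightarrow> 'a list \<Rightarrow> 'a list \<Rightarrow> bool" where
  "same_pair_colors G s w u \<longleftrightarrow>
     (\<forall>i<s. \<forall>j<s. i \<noteq> j \<longrightarrow> equiv_G G (w ! i, w ! j) (u ! i, u ! j))"

definition pair_color_class :: "'a set \<Rightarrow> ('a \<times> 'a) set set \<Rightarrow> nat \<Rightarrow> 'a list \<Rightarrow> 'a list set" where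
  "pair_color_class V G s w = {u \<in> tuples V s. same_pair_colors G s w u}"

definition pair_color_classes :: "'a set \<Rightarrow> ('a \<times> 'a) set set \<Rightarrow> nat \<Rightarrow> 'a list set set" where
  "pair_color_classes V G s = pair_color_class V G s ` tuples V s"

lemma mem_tuples_1: "xs \<in> tuples V 1 \<longleftrightarrow> (\<exists>x. xs = [x] \<and> x \<in> V)"
  by (auto simp: tuples_def length_Suc_conv)

lemma mem_tuples_2: "xs \<in> tuples V 2 \<longleftrightarrow> (\<exists>x y. xs = [x, y] \<and> x \<noteq> y \<and> x \<in> V \<and> y \<in> V)"
  by (auto simp: tuples_def length_Suc_conv numeral_2_eq_2)

lemma mem_tuples_3:
  "xs \<in> tuples V 3 \<longleftrightarrow>
     (\<exists>x y z. xs = [x, y, z] \<and> x \<noteq> y \<and> x \<noteq> z \<and> y \<noteq> z \<and> x \<in> V \<and> y \<in> V \<and> z \<in> V)"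
  by (auto simp: tuples_def length_Suc_conv numeral_3_eq_3)

lemma nth_mem_tuples: "xs \<in> tuples V s \<Longrightarrow> i < s \<Longrightarrow> xs ! i \<in> V"
  by (auto simp: tuples_def)

lemma pair_color_class_subset_tuples: "pair_color_class V G s w \<subseteq> tuples V s"
  by (simp add: pair_color_class_def)

lemma length_mem_pair_color_class: "u \<in> pair_color_class V G s w \<Longrightarrow> length u = s"
  by (simp add: pair_color_class_def tuples_def)

lemma partition_on_pair_color_classes:
  assumes "partition_on (V \<times> V) G"
  shows "partition_on (tuples V s) (pair_color_classes V G s)"
proof -
  have E: "equiv (V \<times> V) {(x, y). equiv_G G x y}"
    using equiv_partition_on[OF assms] by (simp add: equiv_G_def)
  then have G_refl: "equiv_G G x x" if "x \<in> V \<times> V" for x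
    using that by (auto dest: equiv_class_self)
  have G_sym: "equiv_G G y x" if "equiv_G G x y" for x y
    using that by (auto simp: equiv_G_def)
  have G_trans: "equiv_G G x z" if "equiv_G G x y" "equiv_G G y z" for x y z
    using that E unfolding equiv_def trans_def by blast
  define R where "R = {(w, u). w \<in> tuples V s \<and> u \<in> tuples V s \<and> same_pair_colors G s w u}"
  have "equiv (tuples V s) R"
  proof (rule equivI)
    show "R \<subseteq> tuples V s \<times> tuples V s" by (auto simp: R_def)
    show "refl_on (tuples V s) R"
      unfolding refl_on_def R_def same_pair_colors_def by (auto intro!: G_refl intro: nth_mem_tuples)
    show "sym R"
      by (rule symI) (auto simp: R_def same_pair_colors_def intro: G_sym)
    show "trans R"
      by (rule transI) (clarsimp simp: R_def same_pair_colors_def, metis G_trans)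
  qed
  moreover have "tuples V s // R = pair_color_classes V G s"
    by (auto simp: quotient_def R_def pair_color_classes_def pair_color_class_def)
  ultimately show ?thesis
    using partition_on_quotient by metis
qed

lemma length_del_coord: "i \<in> {1..length xs} \<Longrightarrow> length (del_coord i xs) = length xs - 1"
  by (auto simp: del_coord_def)

lemma nth_del_coord:
  assumes "i \<in> {1..length xs}" "j < length xs - 1"
  shows "del_coord i xs ! j = xs ! (if j < i - 1 then j else Suc j)"
  using assms by (auto simp: del_coord_def nth_append min_def)

lemma del_coord_mem_tuples:
  assumes xs: "xs \<in> tuples V s" and i: "i \<in> {1..s}"
  shows "del_coord i xs \<in> tuples V (s - 1)"
proof -
  have "distinct xs" "set xs \<subseteq> V" "length xs = s" using xs by (auto simp: tuples_def)
  moreover have "set (take (i - 1) xs) \<inter> set (drop i xs) = {}"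
    using set_take_disj_set_drop_if_distinct[OF \<open>distinct xs\<close>, of "i - 1" i] by simp
  ultimately show ?thesis
    using i set_take_subset set_drop_subset length_del_coord[of i xs]
    by (fastforce simp: tuples_def del_coord_def)
qed

lemma del_coord_mem_pair_color_class:
  assumes u: "u \<in> pair_color_class V G s w" and w: "length w = s" and i: "i \<in> {1..s}"
  shows "del_coord i u \<in> pair_color_class V G (s - 1) (del_coord i w)"
proof -
  define \<sigma> where "\<sigma> j = (if j < i - 1 then j else Suc j)" for j
  have u_tuple: "u \<in> tuples V s" and colors: "same_pair_colors G s w u"
    using u by (auto simp: pair_color_class_def)
  have "length u = s" using u by (rule length_mem_pair_color_class)
  have \<sigma>: "\<sigma> j < s" "\<sigma> j \<noteq> \<sigma> k" if "j < s - 1" "k < s - 1" "j \<noteq> k" for j k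
    using that by (auto simp: \<sigma>_def)
  have "same_pair_colors G (s - 1) (del_coord i w) (del_coord i u)"
    unfolding same_pair_colors_def
  proof (intro allI impI)
    fix j k assume "j < s - 1" "k < s - 1" "j \<noteq> k"
    then show "equiv_G G (del_coord i w ! j, del_coord i w ! k) (del_coord i u ! j, del_coord i u ! k)"
      using colors \<sigma>[of j k] i w \<open>length u = s\<close>
      by (simp add: same_pair_colors_def nth_del_coord flip: \<sigma>_def)
  qed
  then show ?thesis
    using del_coord_mem_tuples[OF u_tuple i] by (simp add: pair_color_class_def)
qed

lemma length_perm_tuple [simp]: "length (perm_tuple \<tau> xs) = length xs"
  by (simp add: perm_tuple_def)

lemma nth_perm_tuple [simp]: "i < length xs \<Longrightarrow> perm_tuple \<tau> xs ! i = xs ! \<tau> i"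
  by (simp add: perm_tuple_def)

lemma perm_tuple_mem_tuples:
  assumes \<tau>: "\<tau> permutes {0..<s}" and xs: "xs \<in> tuples V s"
  shows "perm_tuple \<tau> xs \<in> tuples V s"
proof -
  have "length xs = s" "distinct xs" "set xs \<subseteq> V" using xs by (auto simp: tuples_def)
  moreover have "\<tau> i < s" if "i < s" for i
    using permutes_in_image[OF \<tau>] that by simp
  moreover have "\<tau> i = \<tau> j \<longleftrightarrow> i = j" for i j
    using permutes_inj[OF \<tau>] by (simp add: inj_eq)
  ultimately show ?thesis
    by (auto simp: tuples_def distinct_conv_nth in_set_conv_nth) (meson nth_mem subsetD)
qed

lemma perm_tuple_inv_perm_tuple:
  assumes "\<tau> permutes {0..<length xs}"
  shows "perm_tuple (inv \<tau>) (perm_tuple \<tau> xs) = xs"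
proof (rule nth_equalityI)
  fix i assume "i < length (perm_tuple (inv \<tau>) (perm_tuple \<tau> xs))"
  then have "i < length xs" "inv \<tau> i < length xs"
    using permutes_in_image[OF permutes_inv[OF assms]] by auto
  then show "perm_tuple (inv \<tau>) (perm_tuple \<tau> xs) ! i = xs ! i"
    using permutes_inverses(1)[OF assms] by simp
qed simp

lemma perm_tuple_mem_pair_color_class:
  assumes \<tau>: "\<tau> permutes {0..<s}" and u: "u \<in> pair_color_class V G s w" and w: "length w = s"
  shows "perm_tuple \<tau> u \<in> pair_color_class V G s (perm_tuple \<tau> w)"
proof -
  have "\<tau> i < s" if "i < s" for i
    using permutes_in_image[OF \<tau>] that by simp
  moreover have "\<tau> i = \<tau> j \<longleftrightarrow> i = j" for i j
    using permutes_inj[OF \<tau>] by (simp add: inj_eq)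
  moreover have "length u = s" using u by (rule length_mem_pair_color_class)
  ultimately show ?thesis
    using u w perm_tuple_mem_tuples[OF \<tau>, of u V]
    by (simp add: pair_color_class_def same_pair_colors_def)
qed

lemma image_perm_tuple_pair_color_class:
  assumes \<tau>: "\<tau> permutes {0..<s}" and w: "length w = s"
  shows "perm_tuple \<tau> ` pair_color_class V G s w = pair_color_class V G s (perm_tuple \<tau> w)"
proof
  show "perm_tuple \<tau> ` pair_color_class V G s w \<subseteq> pair_color_class V G s (perm_tuple \<tau> w)"
    using perm_tuple_mem_pair_color_class[OF \<tau> _ w] by blast
next
  have \<tau>': "inv \<tau> permutes {0..<s}" using permutes_inv[OF \<tau>] .
  show "pair_color_class V G s (perm_tuple \<tau> w) \<subseteq> perm_tuple \<tau> ` pair_color_class V G s w"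
  proof
    fix u assume u: "u \<in> pair_color_class V G s (perm_tuple \<tau> w)"
    then have "length u = s" by (rule length_mem_pair_color_class)
    have "perm_tuple (inv \<tau>) u \<in> pair_color_class V G s w"
      using perm_tuple_mem_pair_color_class[OF \<tau>' u] perm_tuple_inv_perm_tuple[of \<tau> w] \<tau> w by simp
    moreover have "u = perm_tuple \<tau> (perm_tuple (inv \<tau>) u)"
      using perm_tuple_inv_perm_tuple[of "inv \<tau>" u] \<tau>' \<open>length u = s\<close> inv_inv_eq[OF permutes_bij[OF \<tau>]]
      by simp
    ultimately show "u \<in> perm_tuple \<tau> ` pair_color_class V G s w" by blast
  qed
qed

definition ins_coord :: "nat \<Rightarrow> 'a \<Rightarrow> 'a list \<Rightarrow> 'a list" where
  "ins_coord i x xs = take (i - 1) xs @ x # drop (i - 1) xs"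

lemma del_coord_ins_coord: "i \<in> {1..Suc (length xs)} \<Longrightarrow> del_coord i (ins_coord i x xs) = xs"
  by (cases i) (auto simp: del_coord_def ins_coord_def)

lemma ins_coord_del_coord:
  "i \<in> {1..length xs} \<Longrightarrow> ins_coord i (xs ! (i - 1)) (del_coord i xs) = xs"
  by (cases i) (auto simp: del_coord_def ins_coord_def min_def Cons_nth_drop_Suc)

lemma card_del_coord_fibre:
  assumes C: "C \<subseteq> {xs. length xs = Suc (length u)}" and i: "i \<in> {1..Suc (length u)}"
  shows "card {u' \<in> C. del_coord i u' = u} = card {x. ins_coord i x u \<in> C}"
proof -
  have "{u' \<in> C. del_coord i u' = u} = (\<lambda>x. ins_coord i x u) ` {x. ins_coord i x u \<in> C}"
  proof (intro equalityI subsetI)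
    fix u' assume "u' \<in> {u' \<in> C. del_coord i u' = u}"
    then show "u' \<in> (\<lambda>x. ins_coord i x u) ` {x. ins_coord i x u \<in> C}"
      using C i ins_coord_del_coord[of i u'] by (auto intro!: image_eqI[of _ _ "u' ! (i - 1)"])
  qed (use del_coord_ins_coord[OF i] in auto)
  moreover have "inj (\<lambda>x. ins_coord i x u)"
    using i by (auto intro!: injI simp: ins_coord_def)
  ultimately show ?thesis
    by (simp add: card_image inj_on_subset)
qed

lemma m_scheme_cong:
  assumes "\<And>s. s \<in> {1..m} \<Longrightarrow> P s = Q s"
  shows "m_scheme V m P \<longleftrightarrow> m_scheme V m Q"
proof -
  have PQ: "P s = Q s" "P (s - 1) = Q (s - 1)" if "s \<in> {2..m}" for s
  proof -
    have "s \<in> {1..m}" "s - 1 \<in> {1..m}" using that by auto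
    then show "P s = Q s" "P (s - 1) = Q (s - 1)" using assms by blast+
  qed
  then show ?thesis
    using assms unfolding m_scheme_def m_collection_def by (simp only: PQ assms cong: ball_cong)
qed

lemma all_pairs_less_2: "(\<forall>i<2. \<forall>j<2. i < j \<longrightarrow> P i j) \<longleftrightarrow> P 0 (1::nat)"
  by (auto simp: numeral_2_eq_2 less_Suc_eq)

lemma all_pairs_less_3:
  "(\<forall>i<3. \<forall>j<3. i < j \<longrightarrow> P i j) \<longleftrightarrow> P 0 1 \<and> P 0 2 \<and> P (1::nat) (2::nat)"
  by (auto simp: numeral_3_eq_3 numeral_2_eq_2 less_Suc_eq)

locale assoc_scheme =
  fixes V :: "'a set" and G :: "('a \<times> 'a) set set"
  assumes association_scheme: "association_scheme V G"
begin

lemma partition: "partition_on (V \<times> V) G"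
  and Id_on_mem: "Id_on V \<in> G"
  and converse_mem: "g \<in> G \<Longrightarrow> converse g \<in> G"
  using association_scheme by (auto simp: association_scheme_def)

lemma intersection_number_eq:
  assumes "f \<in> G" "g \<in> G" "h \<in> G" "(a, b) \<in> h" "(c, d) \<in> h"
  shows "card {x. (a, x) \<in> f \<and> (x, b) \<in> g} = card {x. (c, x) \<in> f \<and> (x, d) \<in> g}"
proof -
  have "\<forall>p\<in>h. \<forall>q\<in>h. card {x. (fst p, x) \<in> f \<and> (x, snd p) \<in> g} =
      card {x. (fst q, x) \<in> f \<and> (x, snd q) \<in> g}"
    using association_scheme assms(1-3) unfolding association_scheme_def by blast
  from this[rule_format, OF assms(4,5)] show ?thesis by simp
qed

lemma mem_unique: "g \<in> G \<Longrightarrow> g' \<in> G \<Longrightarrow> p \<in> g \<Longrightarrow> p \<in> g' \<Longrightarrow> g = g'"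
  using partition_onD2[OF partition] by (auto simp: disjoint_def)

lemma mem_G_subset: "g \<in> G \<Longrightarrow> g \<subseteq> V \<times> V"
  using partition_onD1[OF partition] by blast

lemma ex_mem_G: "x \<in> V \<Longrightarrow> y \<in> V \<Longrightarrow> \<exists>g\<in>G. (x, y) \<in> g"
  using partition_onD1[OF partition] by blast

lemma mem_G_nonempty: "g \<in> G \<Longrightarrow> g \<noteq> {}"
  using partition_onD3[OF partition] by blast

lemma V_nonempty: "V \<noteq> {}"
  using mem_G_nonempty[OF Id_on_mem] by auto

lemma neq_Id_on_iff: "g \<in> G \<Longrightarrow> (x, y) \<in> g \<Longrightarrow> g \<noteq> Id_on V \<longleftrightarrow> x \<noteq> y"
  using mem_unique[OF _ Id_on_mem] mem_G_subset by blast

lemma equiv_G_iff_mem: "g \<in> G \<Longrightarrow> p \<in> g \<Longrightarrow> equiv_G G p q \<longleftrightarrow> q \<in> g"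
  unfolding equiv_G_def using mem_unique by blast

lemma equiv_G_swap: "equiv_G G (a, b) (c, d) \<longleftrightarrow> equiv_G G (b, a) (d, c)"
  using converse_mem unfolding equiv_G_def by (metis converse.simps converse_converse)

lemma same_pair_colors_iff_less:
  "same_pair_colors G s w u \<longleftrightarrow>
     (\<forall>i<s. \<forall>j<s. i < j \<longrightarrow> equiv_G G (w ! i, w ! j) (u ! i, u ! j))"
  (is "_ \<longleftrightarrow> (\<forall>i<s. \<forall>j<s. i < j \<longrightarrow> ?same i j)")
proof
  assume less: "\<forall>i<s. \<forall>j<s. i < j \<longrightarrow> ?same i j"
  have "?same i j" if "i < s" "j < s" "i \<noteq> j" for i j
  proof (cases "i < j")
    case False
    then have "?same j i" using less that by simp
    then show ?thesis using equiv_G_swap by blast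
  qed (use less that in blast)
  then show "same_pair_colors G s w u" by (simp add: same_pair_colors_def)
qed (simp add: same_pair_colors_def)

lemma off_diagonal_mem:
  assumes "g \<in> G" "(p, q) \<in> g" "p \<noteq> q" "(x, y) \<in> g"
  shows "x \<noteq> y" "x \<in> V" "y \<in> V"
  using assms neq_Id_on_iff[OF assms(1)] mem_G_subset[OF assms(1)] by blast+

lemma mem_pair_color_class_2_iff:
  assumes "g \<in> G" "(p, q) \<in> g" "p \<noteq> q"
  shows "[x, y] \<in> pair_color_class V G 2 [p, q] \<longleftrightarrow> (x, y) \<in> g"
  using assms off_diagonal_mem[OF assms]
  by (auto simp: pair_color_class_def same_pair_colors_iff_less all_pairs_less_2 mem_tuples_2
      equiv_G_iff_mem)

lemma mem_pair_color_class_3_iff: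
  assumes "f \<in> G" "g \<in> G" "h \<in> G" "(p, q) \<in> f" "(p, r) \<in> g" "(q, r) \<in> h"
    and "[p, q, r] \<in> tuples V 3"
  shows "[x, y, z] \<in> pair_color_class V G 3 [p, q, r] \<longleftrightarrow> (x, y) \<in> f \<and> (x, z) \<in> g \<and> (y, z) \<in> h"
proof -
  have "p \<noteq> q" "p \<noteq> r" "q \<noteq> r" using assms(7) by (auto simp: mem_tuples_3)
  then have "[x, y, z] \<in> tuples V 3" if "(x, y) \<in> f" "(x, z) \<in> g" "(y, z) \<in> h"
    using that off_diagonal_mem[OF assms(1,4)] off_diagonal_mem[OF assms(2,5)]
      off_diagonal_mem[OF assms(3,6)]
    unfolding mem_tuples_3 by blast
  moreover have "same_pair_colors G 3 [p, q, r] [x, y, z] \<longleftrightarrow>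
      (x, y) \<in> f \<and> (x, z) \<in> g \<and> (y, z) \<in> h"
    by (simp add: same_pair_colors_iff_less all_pairs_less_3 equiv_G_iff_mem[OF assms(1,4)]
        equiv_G_iff_mem[OF assms(2,5)] equiv_G_iff_mem[OF assms(3,6)])
  ultimately show ?thesis
    by (auto simp: pair_color_class_def)
qed

lemma pair_color_classes_1: "pair_color_classes V G 1 = {(\<lambda>v. [v]) ` V}"
proof -
  have "tuples V 1 = (\<lambda>v. [v]) ` V"
    unfolding set_eq_iff mem_tuples_1 by blast
  moreover have "pair_color_class V G 1 w = tuples V 1" for w
    by (simp add: pair_color_class_def same_pair_colors_def)
  ultimately show ?thesis
    using V_nonempty by (auto simp: pair_color_classes_def)
qed

lemma rel_tuples_eq_pair_color_class:
  assumes "g \<in> G" "(p, q) \<in> g" "p \<noteq> q"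
  shows "rel_tuples g = pair_color_class V G 2 [p, q]"
proof (intro equalityI subsetI)
  fix u assume "u \<in> rel_tuples g"
  then show "u \<in> pair_color_class V G 2 [p, q]"
    using mem_pair_color_class_2_iff[OF assms] by (auto simp: rel_tuples_def)
next
  fix u assume u: "u \<in> pair_color_class V G 2 [p, q]"
  then have "u \<in> tuples V 2" by (rule subsetD[OF pair_color_class_subset_tuples])
  then obtain x y where "u = [x, y]" by (auto simp: mem_tuples_2)
  with u show "u \<in> rel_tuples g"
    using mem_pair_color_class_2_iff[OF assms] by (auto simp: rel_tuples_def)
qed

lemma rel_tuples_image_eq_pair_color_classes_2:
  "rel_tuples ` (G - {Id_on V}) = pair_color_classes V G 2"
proof (intro equalityI subsetI)
  fix C assume "C \<in> rel_tuples ` (G - {Id_on V})"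
  then obtain g where g: "g \<in> G" "g \<noteq> Id_on V" and C: "C = rel_tuples g" by blast
  obtain p q where pq: "(p, q) \<in> g" using mem_G_nonempty[OF g(1)] by auto
  then have "p \<noteq> q" "p \<in> V" "q \<in> V"
    using neq_Id_on_iff[OF g(1)] g(2) mem_G_subset[OF g(1)] by auto
  then show "C \<in> pair_color_classes V G 2"
    using rel_tuples_eq_pair_color_class[OF g(1) pq] C
    by (auto simp: pair_color_classes_def mem_tuples_2)
next
  fix C assume "C \<in> pair_color_classes V G 2"
  then obtain p q where C: "C = pair_color_class V G 2 [p, q]" and "p \<noteq> q" "p \<in> V" "q \<in> V"
    by (auto simp: pair_color_classes_def mem_tuples_2)
  moreover obtain g where "g \<in> G" "(p, q) \<in> g" using ex_mem_G \<open>p \<in> V\<close> \<open>q \<in> V\<close> by blast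
  ultimately show "C \<in> rel_tuples ` (G - {Id_on V})"
    using rel_tuples_eq_pair_color_class neq_Id_on_iff by blast
qed

lemma P3_of_eq_pair_color_classes_3: "P3_of V G = pair_color_classes V G 3"
  unfolding P3_of_def pair_color_classes_def pair_color_class_def same_pair_colors_iff_less
    all_pairs_less_3 ..

lemma pair_color_classes_regular_2:
  assumes D: "D \<in> pair_color_classes V G 1" "u \<in> D" "v \<in> D"
    and i: "i \<in> {1..2}" and C: "C \<in> pair_color_classes V G 2"
  shows "card {u' \<in> C. del_coord i u' = u} = card {v' \<in> C. del_coord i v' = v}"
proof -
  obtain a b where uv: "u = [a]" "v = [b]" and "a \<in> V" "b \<in> V"
    using D pair_color_classes_1 by auto
  obtain p q where C_eq: "C = pair_color_class V G 2 [p, q]" and "p \<noteq> q" "p \<in> V" "q \<in> V"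
    using C by (auto simp: pair_color_classes_def mem_tuples_2)
  then obtain g where g: "g \<in> G" "(p, q) \<in> g" using ex_mem_G by blast
  note mem_C = mem_pair_color_class_2_iff[OF g \<open>p \<noteq> q\<close>, folded C_eq]
  obtain r1 r2 where r: "r1 \<in> G" "r2 \<in> G"
    and fibre: "\<And>c. {x. ins_coord i x [c] \<in> C} = {x. (c, x) \<in> r1 \<and> (x, c) \<in> r2}"
  proof -
    from i consider "i = 1" | "i = 2" by fastforce
    then show thesis
    proof cases
      case 1
      then show thesis
        using that[of "converse g" g] g converse_mem by (simp add: ins_coord_def mem_C)
    next
      case 2
      then show thesis
        using that[of g "converse g"] g converse_mem by (simp add: ins_coord_def mem_C)
    qed
  qed
  have "C \<subseteq> {xs. length xs = Suc (length [c])}" for c :: 'a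
    using length_mem_pair_color_class C_eq by fastforce
  then have "card {u' \<in> C. del_coord i u' = [c]} = card {x. (c, x) \<in> r1 \<and> (x, c) \<in> r2}" for c
    using card_del_coord_fibre[of C "[c]" i] i fibre by simp
  then show ?thesis
    using intersection_number_eq[OF r Id_on_mem, of a a b b] \<open>a \<in> V\<close> \<open>b \<in> V\<close> uv
    by (simp add: Id_on_iff)
qed

lemma card_intersection_cond_eq:
  assumes "r1 \<in> G" "r2 \<in> G" "r3 \<in> G" "k \<in> G" "(a, b) \<in> k" "(c, d) \<in> k"
  shows "card {x. (a, x) \<in> r1 \<and> (x, b) \<in> r2 \<and> (a, b) \<in> r3} =
    card {x. (c, x) \<in> r1 \<and> (x, d) \<in> r2 \<and> (c, d) \<in> r3}"
proof (cases "(a, b) \<in> r3")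
  case True
  then have "r3 = k" using mem_unique assms by blast
  then show ?thesis
    using intersection_number_eq[OF assms(1,2,4-6)] assms(5,6) by simp
next
  case False
  then have "(c, d) \<notin> r3" using mem_unique assms by blast
  with False show ?thesis by simp
qed

lemma pair_color_classes_regular_3:
  assumes D: "D \<in> pair_color_classes V G 2" "u \<in> D" "v \<in> D"
    and i: "i \<in> {1..3}" and C: "C \<in> pair_color_classes V G 3"
  shows "card {u' \<in> C. del_coord i u' = u} = card {v' \<in> C. del_coord i v' = v}"
proof -
  obtain k where k: "k \<in> G" "D = rel_tuples k"
    using D(1) by (auto simp flip: rel_tuples_image_eq_pair_color_classes_2)
  obtain a b c d where uv: "u = [a, b]" "v = [c, d]" "(a, b) \<in> k" "(c, d) \<in> k"
    using D(2,3) k by (auto simp: rel_tuples_def)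
  obtain p q t where w: "[p, q, t] \<in> tuples V 3" and C_eq: "C = pair_color_class V G 3 [p, q, t]"
    using C by (auto simp: pair_color_classes_def mem_tuples_3)
  then have "p \<in> V" "q \<in> V" "t \<in> V" by (auto simp: mem_tuples_3)
  then obtain f g h where fgh: "f \<in> G" "g \<in> G" "h \<in> G" "(p, q) \<in> f" "(p, t) \<in> g" "(q, t) \<in> h"
    using ex_mem_G by metis
  note mem_C = mem_pair_color_class_3_iff[OF fgh w, folded C_eq]
  obtain r1 r2 r3 where r: "r1 \<in> G" "r2 \<in> G" "r3 \<in> G" and fibre:
    "\<And>a b. {x. ins_coord i x [a, b] \<in> C} = {x. (a, x) \<in> r1 \<and> (x, b) \<in> r2 \<and> (a, b) \<in> r3}"
  proof -
    from i consider "i = 1" | "i = 2" | "i = 3" by fastforce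
    then show thesis
    proof cases
      case 1
      then show thesis
        using that[of "converse f" g h] fgh converse_mem by (simp add: ins_coord_def mem_C)
    next
      case 2
      then show thesis
        using that[of f h g] fgh by (simp add: ins_coord_def mem_C conj_ac)
    next
      case 3
      then show thesis
        using that[of g "converse h" f] fgh converse_mem by (simp add: ins_coord_def mem_C conj_ac)
    qed
  qed
  have "C \<subseteq> {xs. length xs = Suc (length [a, b])}" for a b :: 'a
    using length_mem_pair_color_class C_eq by fastforce
  then have "card {u' \<in> C. del_coord i u' = [a, b]} =
      card {x. (a, x) \<in> r1 \<and> (x, b) \<in> r2 \<and> (a, b) \<in> r3}" for a b
    using card_del_coord_fibre[of C "[a, b]" i] i fibre by simp
  then show ?thesis
    using card_intersection_cond_eq[OF r k(1) uv(3,4)] uv(1,2) by simp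
qed

theorem m_scheme_pair_color_classes:
  assumes "m \<le> 3"
  shows "m_scheme V m (pair_color_classes V G)"
  unfolding m_scheme_def m_collection_def
proof (intro conjI ballI allI impI)
  fix s assume "s \<in> {1..m}"
  show "partition_on (tuples V s) (pair_color_classes V G s)"
    using partition_on_pair_color_classes[OF partition] .
next
  fix s C u v i assume s: "s \<in> {2..m}" and C: "C \<in> pair_color_classes V G s"
    and uv: "u \<in> C" "v \<in> C" and i: "i \<in> {1..s}"
  obtain w where w: "w \<in> tuples V s" and C_eq: "C = pair_color_class V G s w"
    using C by (auto simp: pair_color_classes_def)
  then have "length w = s" by (simp add: tuples_def)
  then have "del_coord i u \<in> pair_color_class V G (s - 1) (del_coord i w)"
    "del_coord i v \<in> pair_color_class V G (s - 1) (del_coord i w)"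
    using del_coord_mem_pair_color_class[OF _ _ i] uv C_eq by auto
  moreover have "pair_color_class V G (s - 1) (del_coord i w) \<in> pair_color_classes V G (s - 1)"
    using del_coord_mem_tuples[OF w i] unfolding pair_color_classes_def by blast
  ultimately show "\<exists>D\<in>pair_color_classes V G (s - 1). del_coord i u \<in> D \<and> del_coord i v \<in> D"
    by blast
next
  fix s D u v i C assume s: "s \<in> {2..m}" and D: "D \<in> pair_color_classes V G (s - 1)" "u \<in> D" "v \<in> D"
    and i: "i \<in> {1..s}" and C: "C \<in> pair_color_classes V G s"
  have "s = 2 \<or> s = 3" using s assms by auto
  then show "card {u' \<in> C. del_coord i u' = u} = card {v' \<in> C. del_coord i v' = v}"
  proof
    assume "s = 2"
    with D i C show ?thesis by (intro pair_color_classes_regular_2) simp_all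
  next
    assume "s = 3"
    with D i C show ?thesis by (intro pair_color_classes_regular_3) simp_all
  qed
next
  fix s C \<tau> assume "C \<in> pair_color_classes V G s" and \<tau>: "\<tau> permutes {0..<s}"
  then obtain w where w: "w \<in> tuples V s" and C_eq: "C = pair_color_class V G s w"
    by (auto simp: pair_color_classes_def)
  then have "length w = s" by (simp add: tuples_def)
  then have "perm_tuple \<tau> ` C = pair_color_class V G s (perm_tuple \<tau> w)"
    using image_perm_tuple_pair_color_class[OF \<tau>] C_eq by simp
  then show "perm_tuple \<tau> ` C \<in> pair_color_classes V G s"
    using perm_tuple_mem_tuples[OF \<tau> w] unfolding pair_color_classes_def by blast
qed

end

theorem lemma2p4:
  fixes V :: "'a set" and G :: "('a \<times> 'a) set set"
  assumes "finite V" and "association_scheme V G"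
  shows "m_scheme V 3 (\<lambda>s. if s = 1 then {(\<lambda>v. [v]) ` V}
                          else if s = 2 then rel_tuples ` (G - {Id_on V})
                          else P3_of V G)"
proof -
  interpret assoc_scheme V G
    using assms(2) by unfold_locales
  have "(if s = 1 then {(\<lambda>v. [v]) ` V} else if s = 2 then rel_tuples ` (G - {Id_on V})
      else P3_of V G) = pair_color_classes V G s" if "s \<in> {1..3}" for s
  proof -
    have "s = 1 \<or> s = 2 \<or> s = 3" using that by auto
    then show ?thesis
      using pair_color_classes_1 rel_tuples_image_eq_pair_color_classes_2
        P3_of_eq_pair_color_classes_3 by (elim disjE) simp_all
  qed
  then have "m_scheme V 3 (\<lambda>s. if s = 1 then {(\<lambda>v. [v]) ` V}
                          else if s = 2 then rel_tuples ` (G - {Id_on V})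
                          else P3_of V G) \<longleftrightarrow> m_scheme V 3 (pair_color_classes V G)"
    by (rule m_scheme_cong)
  then show ?thesis
    using m_scheme_pair_color_classes[of 3] by simp
qed

end
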